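(* Let $X$ be a strictly systolic angled complex, let $v$ be a vertex of $X$ and let $\sigma$ be a simple cycle in $\mathrm{lk}(v)$. Then either the angular length $\sum_{c\in\sigma} w(c)$ of $\sigma$ is $\geq 2\pi$, or $\sigma$ is the boundary of a triangulated disk without interior vertices all of whose edges are edges of $\mathrm{lk}(v)$.
   Context: A quasi-simplicial complex is a simplicial complex in which multiple edges between two vertices are allowed, but loops are not allowed and no two distinct edges of a 2-simplex coincide (no 2-simplex has two or more edges in common with another in the sense that a 2-simplex's boundary edges are distinct); complexes are locally finite. It is 3-flag if whenever it contains three faces of a tetrahedron (3-simplex) it contains the whole tetrahedron. For a vertex $v$, $\mathrm{lk}(v)$ denotes the geometric link of $v$ in the 2-skeleton $X^{(2)}$: a graph whose vertices correspond to edges of $X$ at $v$ and whose edges correspond to corners (at $v$) of 2-simplices containing $v$. An angled complex is such an $X$ together with a weight function $w$ assigning a nonnegative real number to each corner of each 2-simplex (equivalently, to each edge of each vertex link), with finite image, satisfying the weak triangle inequality: for every vertex $v$ and vertices $v_1,v_2,v_3$ of $\mathrm{lk}(v)$ joined by edges $\alpha_{12},\alpha_{23},\alpha_{13}$ of $\mathrm{lk}(v)$ ($\alpha_{ij}$ from $v_i$ to $v_j$), $w(\alpha_{13})\le w(\alpha_{12})+w(\alpha_{23})$. The angular length of a path in a vertex link is the sum of the weights of its edges. A simple cycle of length greater than 3 in $\mathrm{lk}(v)$ is 2-full if no edge of $\mathrm{lk}(v)$ connects two vertices of the cycle having a common neighbour in the cycle. $X$ is locally $2\pi$-large if every 2-full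 cycle in every vertex link has angular length $\geq 2\pi$. A strictly systolic angled complex is a simply connected, locally $2\pi$-large, 3-flag angled quasi-simplicial complex in which the sum of the three weights of each 2-simplex is strictly less than $\pi$. *)

theory Defs
  imports Complex_Main
begin

text \<open>Simplices are abstract objects (so that multiple edges / triangles with the
same vertex sets are allowed).  Simplices of dimension > 3
play no role in any of the notions below and are omitted.\<close>

record ('v, 'e, 't, 'h) qcomplex =
  verts  :: "'v set"
  edges  :: "'e set"
  tris   :: "'t set"
  tets   :: "'h set"
  ends   :: "'e \<Rightarrow> 'v set"
  tedges :: "'t \<Rightarrow> 'e set"
  hfaces :: "'h \<Rightarrow> 't set"

definition tverts :: "('v, 'e, 't, 'h) qcomplex \<Rightarrow> 't \<Rightarrow> 'v set" where
  "tverts X t = \<Union> (ends X ` tedges X t)"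

definition hverts :: "('v, 'e, 't, 'h) qcomplex \<Rightarrow> 'h \<Rightarrow> 'v set" where
  "hverts X h = \<Union> (tverts X ` hfaces X h)"

definition quasi_simplicial :: "('v, 'e, 't, 'h) qcomplex \<Rightarrow> bool" where
  "quasi_simplicial X \<longleftrightarrow>
     (\<forall>e\<in>edges X. ends X e \<subseteq> verts X \<and> card (ends X e) = 2) \<and>
     (\<forall>t\<in>tris X. tedges X t \<subseteq> edges X \<and> card (tedges X t) = 3 \<and>
                 inj_on (ends X) (tedges X t) \<and> card (tverts X t) = 3) \<and>
     (\<forall>t1\<in>tris X. \<forall>t2\<in>tris X. t1 \<noteq> t2 \<longrightarrow> card (tedges X t1 \<inter> tedges X t2) \<le> 1) \<and>
     (\<forall>h\<in>tets X. hfaces X h \<subseteq> tris X \<and> card (hfaces X h) = 4 \<and>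
        (\<forall>f\<in>hfaces X h. \<forall>g\<in>hfaces X h. f \<noteq> g \<longrightarrow> card (tedges X f \<inter> tedges X g) = 1) \<and>
        card (\<Union> (tedges X ` hfaces X h)) = 6 \<and> card (hverts X h) = 4) \<and>
     (\<forall>x\<in>verts X. finite {e\<in>edges X. x \<in> ends X e} \<and>
                   finite {t\<in>tris X. x \<in> tverts X t} \<and>
                   finite {h\<in>tets X. x \<in> hverts X h})"

definition three_flag :: "('v, 'e, 't, 'h) qcomplex \<Rightarrow> bool" where
  "three_flag X \<longleftrightarrow>
     (\<forall>t1\<in>tris X. \<forall>t2\<in>tris X. \<forall>t3\<in>tris X. \<forall>e12 e13 e23.
        t1 \<noteq> t2 \<and> t1 \<noteq> t3 \<and> t2 \<noteq> t3 \<and>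
        tedges X t1 \<inter> tedges X t2 = {e12} \<and>
        tedges X t1 \<inter> tedges X t3 = {e13} \<and>
        tedges X t2 \<inter> tedges X t3 = {e23} \<and>
        e12 \<noteq> e13 \<and> e12 \<noteq> e23 \<and> e13 \<noteq> e23 \<and>
        card (tverts X t1 \<union> tverts X t2 \<union> tverts X t3) = 4
        \<longrightarrow> (\<exists>h\<in>tets X. {t1, t2, t3} \<subseteq> hfaces X h))"

text \<open>The corner of triangle t at vertex x is an edge of lk(x) joining the link
vertices e1, e2 (the two edges of t at x).\<close>

definition link_edge :: "('v, 'e, 't, 'h) qcomplex \<Rightarrow> 'v \<Rightarrow> 't \<Rightarrow> 'e \<Rightarrow> 'e \<Rightarrow> bool" where
  "link_edge X x t e1 e2 \<longleftrightarrow>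
     t \<in> tris X \<and> x \<in> tverts X t \<and> e1 \<in> tedges X t \<and> e2 \<in> tedges X t \<and>
     e1 \<noteq> e2 \<and> x \<in> ends X e1 \<and> x \<in> ends X e2"

definition link_adj :: "('v, 'e, 't, 'h) qcomplex \<Rightarrow> 'v \<Rightarrow> 'e \<Rightarrow> 'e \<Rightarrow> bool" where
  "link_adj X x e1 e2 \<longleftrightarrow> (\<exists>t. link_edge X x t e1 e2)"

definition link_cycle ::
  "('v, 'e, 't, 'h) qcomplex \<Rightarrow> 'v \<Rightarrow> 'e list \<Rightarrow> 't list \<Rightarrow> bool" where
  "link_cycle X x es ts \<longleftrightarrow>
     3 \<le> length es \<and> length ts = length es \<and> distinct es \<and>
     (\<forall>i < length es. link_edge X x (ts ! i) (es ! i) (es ! ((i + 1) mod length es)))"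

definition angular_length :: "('t \<Rightarrow> 'v \<Rightarrow> real) \<Rightarrow> 'v \<Rightarrow> 't list \<Rightarrow> real" where
  "angular_length w x ts = sum_list (map (\<lambda>t. w t x) ts)"

definition cyc_nbr :: "nat \<Rightarrow> nat \<Rightarrow> nat \<Rightarrow> bool" where
  "cyc_nbr n i k \<longleftrightarrow> k = (i + 1) mod n \<or> i = (k + 1) mod n"

definition two_full :: "('v, 'e, 't, 'h) qcomplex \<Rightarrow> 'v \<Rightarrow> 'e list \<Rightarrow> bool" where
  "two_full X x es \<longleftrightarrow>
     3 < length es \<and>
     (\<forall>i j k. i < length es \<and> j < length es \<and> k < length es \<and> i \<noteq> j \<and>
        cyc_nbr (length es) i k \<and> cyc_nbr (length es) j k
        \<longrightarrow> \<not> link_adj X x (es ! i) (es ! j))"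

text \<open>w t x is the weight of the corner of the triangle t at its vertex x.\<close>

definition angled :: "('v, 'e, 't, 'h) qcomplex \<Rightarrow> ('t \<Rightarrow> 'v \<Rightarrow> real) \<Rightarrow> bool" where
  "angled X w \<longleftrightarrow>
     (\<forall>t\<in>tris X. \<forall>x\<in>tverts X t. 0 \<le> w t x) \<and>
     finite {w t x | t x. t \<in> tris X \<and> x \<in> tverts X t} \<and>
     (\<forall>x\<in>verts X. \<forall>t12 t23 t13 e1 e2 e3.
        link_edge X x t12 e1 e2 \<and> link_edge X x t23 e2 e3 \<and> link_edge X x t13 e1 e3
        \<longrightarrow> w t13 x \<le> w t12 x + w t23 x)"

definition locally_2pi_large :: "('v, 'e, 't, 'h) qcomplex \<Rightarrow> ('t \<Rightarrow> 'v \<Rightarrow> real) \<Rightarrow> bool" where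
  "locally_2pi_large X w \<longleftrightarrow>
     (\<forall>x\<in>verts X. \<forall>es ts. link_cycle X x es ts \<and> two_full X x es
        \<longrightarrow> 2 * pi \<le> angular_length w x ts)"

definition edge_path :: "('v, 'e, 't, 'h) qcomplex \<Rightarrow> ('v \<times> 'e \<times> 'v) list \<Rightarrow> bool" where
  "edge_path X p \<longleftrightarrow>
     (\<forall>(a, e, b) \<in> set p. e \<in> edges X \<and> ends X e = {a, b}) \<and>
     (\<forall>i. Suc i < length p \<longrightarrow> snd (snd (p ! i)) = fst (p ! Suc i))"

inductive htpy_step :: "('v, 'e, 't, 'h) qcomplex \<Rightarrow> ('v \<times> 'e \<times> 'v) list \<Rightarrow> ('v \<times> 'e \<times> 'v) list \<Rightarrow> bool"
  for X where
  backtrack: "edge_path X (p @ [(a, e, b), (b, e, a)] @ q) \<Longrightarrow>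
      htpy_step X (p @ [(a, e, b), (b, e, a)] @ q) (p @ q)"
| triangle: "\<lbrakk> t \<in> tris X; tedges X t = {e, e1, e2}; e \<noteq> e1; e \<noteq> e2; e1 \<noteq> e2;
      ends X e1 = {a, c}; ends X e2 = {c, b}; edge_path X (p @ [(a, e, b)] @ q) \<rbrakk> \<Longrightarrow>
      htpy_step X (p @ [(a, e, b)] @ q) (p @ [(a, e1, c), (c, e2, b)] @ q)"

definition edge_htpc :: "('v, 'e, 't, 'h) qcomplex \<Rightarrow> ('v \<times> 'e \<times> 'v) list \<Rightarrow> ('v \<times> 'e \<times> 'v) list \<Rightarrow> bool" where
  "edge_htpc X = (\<lambda>p q. htpy_step X p q \<or> htpy_step X q p)\<^sup>*\<^sup>*"

definition simply_connected_cplx :: "('v, 'e, 't, 'h) qcomplex \<Rightarrow> bool" where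
  "simply_connected_cplx X \<longleftrightarrow>
     verts X \<noteq> {} \<and>
     (\<forall>a\<in>verts X. \<forall>b\<in>verts X. \<exists>p. edge_path X p \<and>
        ((p = [] \<and> a = b) \<or> (p \<noteq> [] \<and> fst (hd p) = a \<and> snd (snd (last p)) = b))) \<and>
     (\<forall>p. edge_path X p \<and> p \<noteq> [] \<and> fst (hd p) = snd (snd (last p)) \<longrightarrow> edge_htpc X p [])"

definition strictly_systolic_angled :: "('v, 'e, 't, 'h) qcomplex \<Rightarrow> ('t \<Rightarrow> 'v \<Rightarrow> real) \<Rightarrow> bool" where
  "strictly_systolic_angled X w \<longleftrightarrow>
     quasi_simplicial X \<and> angled X w \<and> simply_connected_cplx X \<and>
     locally_2pi_large X w \<and> three_flag X \<and>
     (\<forall>t\<in>tris X. (\<Sum>x\<in>tverts X t. w t x) < pi)"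

text \<open>disk_filled G xs: the cycle xs (distinct vertices, cyclic order) is the
boundary of a triangulated disk without interior vertices (i.e. a triangulated
polygon) all of whose edges are G-edges: either xs is a G-triangle, or some
diagonal (chord) of xs is a G-edge cutting it into two such filled cycles.\<close>

inductive disk_filled :: "('a \<Rightarrow> 'a \<Rightarrow> bool) \<Rightarrow> 'a list \<Rightarrow> bool" for G where
  tri: "\<lbrakk> length xs = 3; G (xs ! 0) (xs ! 1); G (xs ! 1) (xs ! 2); G (xs ! 2) (xs ! 0) \<rbrakk>
        \<Longrightarrow> disk_filled G xs"
| split: "\<lbrakk> i + 2 \<le> j; j < length xs; j + 2 \<le> i + length xs; G (xs ! i) (xs ! j);
           disk_filled G (take (j - i + 1) (drop i xs));
           disk_filled G (take (i + 1) xs @ drop j xs) \<rbrakk>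
        \<Longrightarrow> disk_filled G xs"

end

theory Submission
  imports Defs
begin

text \<open>A cycle of length 3 bounds a single triangle of
the link, and a 2-full cycle is long by local 2\<pi>-largeness. Otherwise the two neighbours
of some cycle vertex u are joined by an edge of the link; replacing the two cycle edges
through u by this chord gives a shorter simple cycle, which by the weak triangle inequality
is not longer in angular length, and a disk filling it extends to one of the original cycle
by gluing on the triangle cut off at u.\<close>

definition remove_nth :: "nat \<Rightarrow> 'a list \<Rightarrow> 'a list" where
  "remove_nth k xs = take k xs @ drop (Suc k) xs"

definition skip_index :: "nat \<Rightarrow> nat \<Rightarrow> nat" where
  "skip_index k i = (if i < k then i else Suc i)"

lemma length_remove_nth: "k < length xs \<Longrightarrow> length (remove_nth k xs) = length xs - 1"
  by (simp add: remove_nth_def)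

lemma nth_remove_nth: "i < length xs - 1 \<Longrightarrow> remove_nth k xs ! i = xs ! skip_index k i"
  by (auto simp: remove_nth_def skip_index_def nth_append min_def)

lemma map_remove_nth: "map f (remove_nth k xs) = remove_nth k (map f xs)"
  by (simp add: remove_nth_def take_map drop_map)

lemma distinct_remove_nth: "distinct xs \<Longrightarrow> distinct (remove_nth k xs)"
  by (auto simp: remove_nth_def set_take_disj_set_drop_if_distinct)

lemma sum_list_remove_nth:
  fixes xs :: "'a::ab_group_add list"
  assumes "k < length xs"
  shows "sum_list (remove_nth k xs) = sum_list xs - xs ! k"
  using arg_cong[where f = sum_list, OF id_take_nth_drop[OF assms]]
  by (simp add: remove_nth_def algebra_simps)

lemma sum_list_list_update:
  fixes xs :: "'a::ab_group_add list"
  assumes "k < length xs"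
  shows "sum_list (xs[k := y]) = sum_list xs - xs ! k + y"
  using arg_cong[where f = sum_list, OF id_take_nth_drop[OF assms]]
  by (simp add: upd_conv_take_nth_drop[OF assms] algebra_simps)

lemma inj_skip_index: "inj (skip_index k)"
  by (auto simp: inj_def skip_index_def split: if_splits)

lemma skip_index_less: "i < n - 1 \<Longrightarrow> skip_index k i < n"
  by (auto simp: skip_index_def)

lemma skip_index_surj: "j < n \<Longrightarrow> j \<noteq> k \<Longrightarrow> k < n \<Longrightarrow> \<exists>i < n - 1. skip_index k i = j"
  by (rule exI[of _ "if j < k then j else j - 1"]) (auto simp: skip_index_def)

lemma cyclic_succ_eq: "i < n \<Longrightarrow> Suc i mod n = (if Suc i = n then 0 else Suc i)"
  by (cases "Suc i = n") auto

lemma cyclic_succ_inj: "i < n \<Longrightarrow> j < n \<Longrightarrow> Suc i mod n = Suc j mod n \<Longrightarrow> i = j"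
  by (simp add: cyclic_succ_eq split: if_splits)

lemma cyclic_pred_eq:
  assumes "a < n" "Suc a mod n = k"
  shows "a = (if k = 0 then n - 1 else k - 1)"
  using assms by (auto simp: cyclic_succ_eq split: if_splits)

lemma skip_index_cyclic_succ:
  assumes "k < n" "i < n - 1"
  shows "skip_index k (Suc i mod (n - 1)) =
    (if Suc (skip_index k i) mod n = k then Suc k mod n else Suc (skip_index k i) mod n)"
  using assms by (auto simp: skip_index_def cyclic_succ_eq)

lemma disk_filled_triangle: "G a b \<Longrightarrow> G b c \<Longrightarrow> G c a \<Longrightarrow> disk_filled G [a, b, c]"
  by (rule disk_filled.tri) auto

lemma disk_filled_add_ear:
  assumes sym: "symp G" and len: "4 \<le> length xs" and k: "k < length xs"
    and a: "a < length xs" "(a + 1) mod length xs = k"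
    and b: "b = (k + 1) mod length xs"
    and ear: "G (xs ! a) (xs ! k)" "G (xs ! k) (xs ! b)" "G (xs ! a) (xs ! b)"
    and filled: "disk_filled G (remove_nth k xs)"
  shows "disk_filled G xs"
proof -
  define n where "n = length xs"
  have a_eq: "a = (if k = 0 then n - 1 else k - 1)"
    using cyclic_pred_eq a by (simp add: n_def)
  have b_eq: "b = (if k = n - 1 then 0 else k + 1)"
    using cyclic_succ_eq k b by (auto simp: n_def)
  have chord: "G (xs ! b) (xs ! a)"
    using ear(3) sym by (blast dest: sympD)
  have cut_off: "disk_filled G [xs ! a, xs ! k, xs ! b]" "disk_filled G [xs ! k, xs ! b, xs ! a]"
    "disk_filled G [xs ! b, xs ! a, xs ! k]"
    using ear chord by (auto intro: disk_filled_triangle)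
  consider (first) "k = 0" | (last) "k = n - 1" | (middle) "0 < k" "k < n - 1"
    using k n_def by linarith
  then show ?thesis
  proof cases
    case first
    have triangle: "take (1 + 1) xs @ drop (n - 1) xs = [xs ! k, xs ! b, xs ! a]"
      by (rule nth_equalityI)
        (use first len a_eq b_eq in \<open>auto simp: n_def nth_append less_Suc_eq numeral_3_eq_3\<close>)
    show ?thesis
    proof (rule disk_filled.split[of 1 "n - 1"])
      show "disk_filled G (take (n - 1 - 1 + 1) (drop 1 xs))"
        using filled first len by (simp add: remove_nth_def n_def)
      show "disk_filled G (take (1 + 1) xs @ drop (n - 1) xs)"
        unfolding triangle by (rule cut_off(2))
    qed (use first len chord a_eq b_eq in \<open>auto simp: n_def\<close>)
  next
    case last
    have triangle: "take (0 + 1) xs @ drop (n - 2) xs = [xs ! b, xs ! a, xs ! k]"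
      by (rule nth_equalityI)
        (use last len a_eq b_eq in \<open>auto simp: n_def nth_append less_Suc_eq numeral_3_eq_3\<close>)
    show ?thesis
    proof (rule disk_filled.split[of 0 "n - 2"])
      show "disk_filled G (take (n - 2 - 0 + 1) (drop 0 xs))"
        using filled last len by (simp add: remove_nth_def n_def Suc_diff_Suc numeral_2_eq_2)
      show "disk_filled G (take (0 + 1) xs @ drop (n - 2) xs)"
        unfolding triangle by (rule cut_off(3))
    qed (use last len chord a_eq b_eq in \<open>auto simp: n_def numeral_2_eq_2\<close>)
  next
    case middle
    have triangle: "take (k + 1 - (k - 1) + 1) (drop (k - 1) xs) = [xs ! a, xs ! k, xs ! b]"
      by (rule nth_equalityI)
        (use middle len a_eq b_eq in \<open>auto simp: n_def less_Suc_eq numeral_3_eq_3\<close>)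
    show ?thesis
    proof (rule disk_filled.split[of "k - 1" "k + 1"])
      show "disk_filled G (take (k + 1 - (k - 1) + 1) (drop (k - 1) xs))"
        unfolding triangle by (rule cut_off(1))
      show "disk_filled G (take (k - 1 + 1) xs @ drop (k + 1) xs)"
        using filled middle by (simp add: remove_nth_def)
    qed (use middle len ear(3) a_eq b_eq in \<open>auto simp: n_def\<close>)
  qed
qed

lemma symp_link_adj: "symp (link_adj X x)"
  unfolding symp_def link_adj_def link_edge_def by blast

lemma link_adj_if_link_edge: "link_edge X x t a b \<Longrightarrow> link_adj X x a b"
  by (auto simp: link_adj_def)

lemma link_cycle_edge:
  "link_cycle X x es ts \<Longrightarrow> i < length es \<Longrightarrow>
    link_edge X x (ts ! i) (es ! i) (es ! ((i + 1) mod length es))"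
  by (simp add: link_cycle_def)

lemma link_cycle_3_filled:
  assumes "link_cycle X x es ts" "length es = 3"
  shows "disk_filled (link_adj X x) es"
  using link_cycle_edge[OF assms(1), of 0] link_cycle_edge[OF assms(1), of 1]
    link_cycle_edge[OF assms(1), of 2] assms(2)
  by (intro disk_filled.tri) (auto intro: link_adj_if_link_edge simp: numeral_2_eq_2)

lemma not_two_full_chord:
  assumes "3 < length es" "\<not> two_full X x es"
  obtains a k where "a < length es" "k < length es" "(a + 1) mod length es = k"
    "link_adj X x (es ! a) (es ! ((k + 1) mod length es))"
proof -
  define n where "n = length es"
  obtain i j k where ijk: "i < n" "j < n" "k < n" "i \<noteq> j" "cyc_nbr n i k" "cyc_nbr n j k"
    "link_adj X x (es ! i) (es ! j)"
    using assms unfolding two_full_def n_def by blast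
  have "((i + 1) mod n = k \<and> j = (k + 1) mod n) \<or> ((j + 1) mod n = k \<and> i = (k + 1) mod n)"
    using ijk cyclic_succ_inj[of i n j] unfolding cyc_nbr_def by auto
  then show ?thesis
    using that ijk symp_link_adj[of X x] unfolding n_def by (metis sympD)
qed

lemma link_cycle_shortcut:
  assumes cyc: "link_cycle X x es ts" and len: "4 \<le> length es" and k: "k < length es"
    and a: "a < length es" "(a + 1) mod length es = k"
    and t: "link_edge X x t (es ! a) (es ! ((k + 1) mod length es))"
  obtains ts' where "link_cycle X x (remove_nth k es) ts'"
    and "angular_length w x ts' = angular_length w x ts - w (ts ! a) x - w (ts ! k) x + w t x"
proof -
  define n where "n = length es"
  have lt: "length ts = n" and dist: "distinct es"
    using cyc by (auto simp: link_cycle_def n_def)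
  have "a \<noteq> k"
    using a len by (auto simp: cyclic_succ_eq split: if_splits)
  then obtain p where p: "p < n - 1" "skip_index k p = a"
    using skip_index_surj a k n_def by blast
  define ts' where "ts' = (remove_nth k ts)[p := t]"
  have "link_edge X x (ts' ! i) (remove_nth k es ! i) (remove_nth k es ! (Suc i mod (n - 1)))"
    if i: "i < n - 1" for i
  proof -
    define j where "j = skip_index k i"
    have j: "j < n"
      using skip_index_less[OF i] j_def by simp
    have es'_i: "remove_nth k es ! i = es ! j"
      using i nth_remove_nth j_def n_def by metis
    have es'_succ: "remove_nth k es ! (Suc i mod (n - 1)) =
        es ! (if Suc j mod n = k then Suc k mod n else Suc j mod n)"
      using i nth_remove_nth[of "Suc i mod (n - 1)" es k] skip_index_cyclic_succ[OF k[folded n_def] i]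
      by (simp add: j_def n_def)
    show ?thesis
    proof (cases "i = p")
      case True
      then show ?thesis
        using es'_i es'_succ p a t lt k by (simp add: ts'_def j_def length_remove_nth n_def)
    next
      case False
      then have "j \<noteq> a"
        using p i inj_skip_index[of k] by (auto simp: j_def inj_def)
      then have "Suc j mod n \<noteq> k"
        using cyclic_succ_inj[OF j a(1)[folded n_def]] a(2) n_def by auto
      then show ?thesis
        using False es'_i es'_succ link_cycle_edge[OF cyc j[unfolded n_def]] i lt k
        by (simp add: ts'_def nth_remove_nth j_def length_remove_nth n_def)
    qed
  qed
  then have "link_cycle X x (remove_nth k es) ts'"
    using len k lt by (auto simp: link_cycle_def ts'_def length_remove_nth distinct_remove_nth dist n_def)
  moreover have "angular_length w x ts' = angular_length w x ts - w (ts ! a) x - w (ts ! k) x + w t x"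
    using p a(1) k lt
    by (simp add: angular_length_def ts'_def map_update map_remove_nth sum_list_list_update
        sum_list_remove_nth length_remove_nth nth_remove_nth n_def)
  ultimately show ?thesis
    using that by blast
qed

lemma link_cycle_long_or_filled:
  assumes angled: "angled X w" and large: "locally_2pi_large X w" and x: "x \<in> verts X"
    and cyc: "link_cycle X x es ts"
  shows "2 * pi \<le> angular_length w x ts \<or> disk_filled (link_adj X x) es"
  using cyc
proof (induction "length es" arbitrary: es ts rule: less_induct)
  case less
  define n where "n = length es"
  consider (triangle) "n = 3" | (full) "two_full X x es" | (ear) "3 < n" "\<not> two_full X x es"
    using less.prems by (force simp: link_cycle_def n_def)
  then show ?case
  proof cases
    case triangle
    then show ?thesis
      using link_cycle_3_filled[OF less.prems] n_def by simp
  next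
    case full
    then show ?thesis
      using large x less.prems unfolding locally_2pi_large_def by blast
  next
    case ear
    then obtain a k where a: "a < n" "(a + 1) mod n = k" and k: "k < n"
      and "link_adj X x (es ! a) (es ! ((k + 1) mod n))"
      using not_two_full_chord n_def by metis
    then obtain t where t: "link_edge X x t (es ! a) (es ! ((k + 1) mod n))"
      by (auto simp: link_adj_def)
    have edge_a: "link_edge X x (ts ! a) (es ! a) (es ! k)"
      and edge_k: "link_edge X x (ts ! k) (es ! k) (es ! ((k + 1) mod n))"
      using link_cycle_edge[OF less.prems] a k n_def by auto
    then have "w t x \<le> w (ts ! a) x + w (ts ! k) x"
      using angled x t unfolding angled_def by blast
    moreover obtain ts' where short: "link_cycle X x (remove_nth k es) ts'"
      and "angular_length w x ts' = angular_length w x ts - w (ts ! a) x - w (ts ! k) x + w t x"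
      using link_cycle_shortcut[OF less.prems _ _ _ _ t[unfolded n_def]] a k ear n_def by auto
    moreover have "disk_filled (link_adj X x) es" if "disk_filled (link_adj X x) (remove_nth k es)"
      using disk_filled_add_ear[OF symp_link_adj _ _ _ _ refl _ _ _ that] a k ear n_def
        link_adj_if_link_edge[OF edge_a] link_adj_if_link_edge[OF edge_k] link_adj_if_link_edge[OF t]
      by auto
    ultimately show ?thesis
      using less.hyps[OF _ short] k ear by (force simp: length_remove_nth n_def)
  qed
qed

theorem lemma2p5:
  fixes X :: "('v, 'e, 't, 'h) qcomplex" and w :: "'t \<Rightarrow> 'v \<Rightarrow> real"
    and x :: 'v and es :: "'e list" and ts :: "'t list"
  assumes "strictly_systolic_angled X w"
    and "x \<in> verts X"
    and "link_cycle X x es ts"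
  shows "2 * pi \<le> angular_length w x ts \<or> disk_filled (link_adj X x) es"
  using link_cycle_long_or_filled[OF _ _ assms(2,3)] assms(1)
  by (simp add: strictly_systolic_angled_def)

end
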